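(* Let $s$ be a closed term with $s\succ^k t$ for some abstraction $t$. Then the heap machine satisfies $\sigma_s\succ^{4k+2}([],[g],H)$ for some closure $g$ and heap $H$ with $g\gg_H t$.
   Context: Terms (de Bruijn): $s::=n\mid st\mid\lambda s$; $s$ is closed if all its free de Bruijn indices are... none (i.e. every index $n$ occurring under $d$ binders satisfies $n<d$). Term substitution: $k^k_u=u$, $n^k_u=n$ ($n\ne k$), $(st)^k_u=(s^k_u)(t^k_u)$, $(\lambda s)^k_u=\lambda(s^{k+1}_u)$. Reduction: $(\lambda s)(\lambda t)\succ s^0_{\lambda t}$; $s\succ s'\Rightarrow st\succ s't$; $t\succ t'\Rightarrow(\lambda s)t\succ(\lambda s)t'$. Programs: lists of commands $\mathsf{ret},\mathsf{var}\,n,\mathsf{lam},\mathsf{app}$. Compilation: $\gamma n=[\mathsf{var}\,n]$, $\gamma(st)=\gamma s++\gamma t++[\mathsf{app}]$, $\gamma(\lambda s)=\mathsf{lam}::\gamma s++[\mathsf{ret}]$. $P\gg s$ iff $P=\gamma u$ and $s=\lambda u$. $\varphi P:=\varphi_{0,[]}P$ with $\varphi_{0,Q}(\mathsf{ret}::P)=(Q,P)$, $\varphi_{k+1,Q}(\mathsf{ret}::P)=\varphi_{k,Q++[\mathsf{ret}]}P$, $\varphi_{k,Q}(\mathsf{lam}::P)=\varphi_{k+1,Q++[\mathsf{lam}]}P$, $\varphi_{k,Q}(c::P)=\varphi_{k,Q++[c]}P$ for $c$ a $\mathsf{var}$ or $\mathsf{app}$, undefined otherwise. Addresses are natural numbers;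 a closure is a pair $(P,a)$ of a program and an address; a heap entry is a pair $(g,b)$ of a closure and an address; a heap $H$ is a list of heap entries; $H[a]$ is the $a$-th entry of $H$ for $1\le a\le|H|$ (undefined otherwise, in particular for $a=0$). Lookup: if $H[a]=(g,b)$ then $H[a,0]=g$ and $H[a,n+1]=H[b,n]$; otherwise $H[a,n]$ is undefined. Unfolding $\langle s,a\rangle\triangleright^H_k s'$ is defined inductively: $\langle n,a\rangle\triangleright^H_k n$ if $n<k$; $\langle n,a\rangle\triangleright^H_k s'$ if $n\ge k$, $H[a,n-k]=(P,b)$, $P\gg u$ and $\langle u,b\rangle\triangleright^H_0 s'$; $\langle\lambda s,a\rangle\triangleright^H_k\lambda s'$ if $\langle s,a\rangle\triangleright^H_{k+1}s'$; $\langle st,a\rangle\triangleright^H_k s't'$ if $\langle s,a\rangle\triangleright^H_k s'$ and $\langle t,a\rangle\triangleright^H_k t'$. A closure represents a term, $(P,a)\gg_H s$, iff $P\gg u$ and $\langle u,a\rangle\triangleright^H_0 s$ for some $u$. The heap machine has states $(T,V,H)$ with $T,V$ lists of closures and steps: $((\mathsf{var}\,n::P,a)::T,V,H)\succ((P,a)::T,g::V,H)$ if $H[a,n]=g$; $((\mathsf{lam}::P,a)::T,V,H)\succ((P',a)::T,(Q,a)::V,H)$ if $\varphi P=(Q,P')$; $((\mathsf{app}::P,a)::T,g::(Q,b)::V,H)\succ((Q,|H|+1)::(P,a)::T,V,H++[(g,b)])$; $(([],a)::T,V,H)\succ(T,V,H)$. The initial state is $\sigma_s:=([(\gamma s,0)],[],[])$.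 *)

theory Defs
  imports Main
begin

datatype tm = Var nat | App tm tm | Lam tm

fun bound :: "nat \<Rightarrow> tm \<Rightarrow> bool" where
  "bound d (Var n) = (n < d)"
| "bound d (App s t) = (bound d s \<and> bound d t)"
| "bound d (Lam s) = bound (Suc d) s"

definition closed :: "tm \<Rightarrow> bool" where
  "closed s = bound 0 s"

fun subst :: "tm \<Rightarrow> nat \<Rightarrow> tm \<Rightarrow> tm" where
  "subst (Var n) k u = (if n = k then u else Var n)"
| "subst (App s t) k u = App (subst s k u) (subst t k u)"
| "subst (Lam s) k u = Lam (subst s (Suc k) u)"

inductive step :: "tm \<Rightarrow> tm \<Rightarrow> bool" where
  stepBeta: "step (App (Lam s) (Lam t)) (subst s 0 (Lam t))"
| stepAppL: "step s s' \<Longrightarrow> step (App s t) (App s' t)"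
| stepAppR: "step t t' \<Longrightarrow> step (App (Lam s) t) (App (Lam s) t')"

datatype cmd = Ret | VarC nat | LamC | AppC

fun gamma :: "tm \<Rightarrow> cmd list" where
  "gamma (Var n) = [VarC n]"
| "gamma (App s t) = gamma s @ gamma t @ [AppC]"
| "gamma (Lam s) = LamC # gamma s @ [Ret]"

definition prog_rep :: "cmd list \<Rightarrow> tm \<Rightarrow> bool" where
  "prog_rep P s \<longleftrightarrow> (\<exists>u. P = gamma u \<and> s = Lam u)"

fun phi_aux :: "nat \<Rightarrow> cmd list \<Rightarrow> cmd list \<Rightarrow> (cmd list \<times> cmd list) option" where
  "phi_aux k Q [] = None"
| "phi_aux 0 Q (Ret # P) = Some (Q, P)"
| "phi_aux (Suc k) Q (Ret # P) = phi_aux k (Q @ [Ret]) P"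
| "phi_aux k Q (LamC # P) = phi_aux (Suc k) (Q @ [LamC]) P"
| "phi_aux k Q (VarC n # P) = phi_aux k (Q @ [VarC n]) P"
| "phi_aux k Q (AppC # P) = phi_aux k (Q @ [AppC]) P"

definition phi :: "cmd list \<Rightarrow> (cmd list \<times> cmd list) option" where
  "phi P = phi_aux 0 [] P"

type_synonym clo = "cmd list \<times> nat"
type_synonym heap = "(clo \<times> nat) list"

definition heap_get :: "heap \<Rightarrow> nat \<Rightarrow> (clo \<times> nat) option" where
  "heap_get H a = (if 1 \<le> a \<and> a \<le> length H then Some (H ! (a - 1)) else None)"

fun lookup :: "heap \<Rightarrow> nat \<Rightarrow> nat \<Rightarrow> clo option" where
  "lookup H a 0 = map_option fst (heap_get H a)"
| "lookup H a (Suc n) = (case heap_get H a of None \<Rightarrow> None | Some (g, b) \<Rightarrow> lookup H b n)"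

inductive unfold :: "heap \<Rightarrow> tm \<Rightarrow> nat \<Rightarrow> nat \<Rightarrow> tm \<Rightarrow> bool" where
  unfVarBound: "n < k \<Longrightarrow> unfold H (Var n) a k (Var n)"
| unfVarFree: "n \<ge> k \<Longrightarrow> lookup H a (n - k) = Some (P, b) \<Longrightarrow> prog_rep P u
    \<Longrightarrow> unfold H u b 0 s' \<Longrightarrow> unfold H (Var n) a k s'"
| unfLam: "unfold H s a (Suc k) s' \<Longrightarrow> unfold H (Lam s) a k (Lam s')"
| unfApp: "unfold H s a k s' \<Longrightarrow> unfold H t a k t' \<Longrightarrow> unfold H (App s t) a k (App s' t')"

definition clo_rep :: "heap \<Rightarrow> clo \<Rightarrow> tm \<Rightarrow> bool" where
  "clo_rep H g s \<longleftrightarrow> (\<exists>u. prog_rep (fst g) u \<and> unfold H u (snd g) 0 s)"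

type_synonym state = "clo list \<times> clo list \<times> heap"

inductive mstep :: "state \<Rightarrow> state \<Rightarrow> bool" where
  mVar: "lookup H a n = Some g \<Longrightarrow>
    mstep ((VarC n # P, a) # T, V, H) ((P, a) # T, g # V, H)"
| mLam: "phi P = Some (Q, P') \<Longrightarrow>
    mstep ((LamC # P, a) # T, V, H) ((P', a) # T, (Q, a) # V, H)"
| mApp: "mstep ((AppC # P, a) # T, g # (Q, b) # V, H)
    ((Q, Suc (length H)) # (P, a) # T, V, H @ [(g, b)])"
| mNil: "mstep (([], a) # T, V, H) (T, V, H)"

definition init :: "tm \<Rightarrow> state" where
  "init s = ([(gamma s, 0)], [], [])"

end

theory Submission
  imports Defs
begin

text \<open>A reduction of an application to an abstraction splits into reducing the function part to an
  abstraction, then the argument to an abstraction, one beta step, and the reduction of the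
  substituted body. The machine follows this decomposition: by induction on the number k of
  reduction steps, running the code of any term whose unfolding reduces to an abstraction in k steps
  pushes, after exactly 4k+1 machine steps, a closure representing that abstraction. The heap only
  grows, which preserves all unfoldings, and the substitution of a beta step is realised by the fresh
  heap entry that binds index 0 of the body's environment to the argument closure.\<close>

lemma phi_aux_gamma_append: "phi_aux k Q (gamma u @ R) = phi_aux k (Q @ gamma u) R"
  by (induction u arbitrary: k Q R) auto

lemma phi_gamma_Ret: "phi (gamma u @ Ret # P) = Some (gamma u, P)"
  unfolding phi_def by (simp add: phi_aux_gamma_append)

lemma bound_mono: "bound k s \<Longrightarrow> k \<le> j \<Longrightarrow> bound j s"
  by (induction k s arbitrary: j rule: bound.induct) auto

lemma subst_bound_id: "bound k s \<Longrightarrow> k \<le> j \<Longrightarrow> subst s j v = s"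
  by (induction k s arbitrary: j rule: bound.induct) auto

lemma unfold_bound: "unfold H u a k s \<Longrightarrow> bound k s"
  by (induction rule: unfold.induct) (auto intro: bound_mono)

lemma unfold_self: "bound k s \<Longrightarrow> unfold H s a k s"
  by (induction k s arbitrary: a rule: bound.induct) (auto intro: unfold.intros)

lemma unfold_LamE:
  assumes "unfold H (Lam u) a k s"
  obtains s' where "s = Lam s'" and "unfold H u a (Suc k) s'"
  using assms by (cases rule: unfold.cases) auto

lemma heap_get_append: "heap_get H a = Some x \<Longrightarrow> heap_get (H @ X) a = Some x"
  by (auto simp: heap_get_def nth_append split: if_splits)

lemma lookup_append: "lookup H a n = Some g \<Longrightarrow> lookup (H @ X) a n = Some g"
  by (induction H a n rule: lookup.induct)
     (auto simp: heap_get_append split: option.splits dest: heap_get_append[where X = X])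

lemma unfold_append: "unfold H u a k s \<Longrightarrow> unfold (H @ X) u a k s"
  by (induction rule: unfold.induct) (auto intro: unfold.intros lookup_append)

lemma clo_rep_append: "clo_rep H g s \<Longrightarrow> clo_rep (H @ X) g s"
  unfolding clo_rep_def using unfold_append by blast

lemma unfold_subst:
  assumes "unfold H w c (Suc k) x" and "heap_get H d = Some (g, c)" and "clo_rep H g v"
  shows "unfold H w d k (subst x k v)"
  using assms
proof (induction H w c "Suc k" x arbitrary: k rule: unfold.induct)
  case (unfVarBound n H a)
  show ?case
  proof (cases "n = k")
    case True
    obtain P b where g: "g = (P, b)" by (cases g)
    with unfVarBound.prems(2) obtain u where "prog_rep P u" and "unfold H u b 0 v"
      unfolding clo_rep_def by auto
    moreover have "lookup H d (n - k) = Some (P, b)"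
      using True unfVarBound.prems(1) g by simp
    ultimately show ?thesis using True by (auto intro: unfVarFree)
  next
    case False
    with unfVarBound.hyps show ?thesis by (auto intro: unfold.unfVarBound)
  qed
next
  case (unfVarFree n H a P b u s')
  have "n - k = Suc (n - Suc k)"
    using unfVarFree.hyps(1) by simp
  then have "lookup H d (n - k) = Some (P, b)"
    using unfVarFree.hyps(2) unfVarFree.prems(1) by simp
  moreover have "subst s' k v = s'"
    using unfold_bound[OF unfVarFree.hyps(4)] by (auto intro: subst_bound_id)
  ultimately show ?case using unfVarFree.hyps by (auto intro: unfold.unfVarFree)
qed (auto intro: unfold.intros)

lemma relpowp_step_Lam: "(step ^^ k) (Lam s) t \<Longrightarrow> k = 0 \<and> t = Lam s"
  by (cases k) (auto simp del: relpowp.simps(2) dest!: relpowp_Suc_D2 elim: step.cases)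

lemma relpowp_step_App_LamE:
  assumes "(step ^^ k) (App s1 s2) (Lam w)"
  obtains k1 k2 k3 a b where "k = k1 + k2 + Suc k3"
    and "(step ^^ k1) s1 (Lam a)" and "(step ^^ k2) s2 (Lam b)"
    and "(step ^^ k3) (subst a 0 (Lam b)) (Lam w)"
  using assms
proof (induction k arbitrary: s1 s2 thesis)
  case 0
  then show ?case by simp
next
  case (Suc k)
  from relpowp_Suc_D2[OF Suc.prems(2)] obtain y
    where "step (App s1 s2) y" and y: "(step ^^ k) y (Lam w)" by blast
  then show ?case
  proof (cases rule: step.cases)
    case stepBeta
    with y show ?thesis by (intro Suc.prems(1)[of 0 0 k]) auto
  next
    case (stepAppL s1')
    show ?thesis
    proof (rule Suc.IH)
      fix k1 k2 k3 a b
      assume "k = k1 + k2 + Suc k3" "(step ^^ k1) s1' (Lam a)" "(step ^^ k2) s2 (Lam b)"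
        "(step ^^ k3) (subst a 0 (Lam b)) (Lam w)"
      with stepAppL show ?thesis
        by (intro Suc.prems(1)[of "Suc k1" k2 k3 a b])
           (auto simp del: relpowp.simps intro: relpowp_Suc_I2)
    qed (use y stepAppL in simp)
  next
    case (stepAppR s2' s)
    show ?thesis
    proof (rule Suc.IH)
      fix k1 k2 k3 a b
      assume "k = k1 + k2 + Suc k3" "(step ^^ k1) (Lam s) (Lam a)" "(step ^^ k2) s2' (Lam b)"
        "(step ^^ k3) (subst a 0 (Lam b)) (Lam w)"
      with stepAppR relpowp_step_Lam show ?thesis
        by (intro Suc.prems(1)[of 0 "Suc k2" k3 a b])
           (auto simp del: relpowp.simps intro: relpowp_Suc_I2)
    qed (use y stepAppR in simp)
  qed
qed

lemma mstep_App_beta: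
  assumes "clo_rep H (Q, c) (Lam a)" and "clo_rep H g (Lam b)"
  obtains w where "mstep ((AppC # P, d) # T, g # (Q, c) # V, H)
          ((gamma w @ [], Suc (length H)) # (P, d) # T, V, H @ [(g, c)])"
    and "unfold (H @ [(g, c)]) w (Suc (length H)) 0 (subst a 0 (Lam b))"
proof -
  let ?H = "H @ [(g, c)]"
  from assms(1) obtain w where Q: "Q = gamma w" and "unfold H (Lam w) c 0 (Lam a)"
    unfolding clo_rep_def prog_rep_def by auto
  then have "unfold ?H w c (Suc 0) a"
    by (auto elim: unfold_LamE intro: unfold_append)
  moreover have "heap_get ?H (Suc (length H)) = Some (g, c)"
    by (simp add: heap_get_def)
  ultimately have "unfold ?H w (Suc (length H)) 0 (subst a 0 (Lam b))"
    using unfold_subst clo_rep_append[OF assms(2)] by blast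
  moreover have "mstep ((AppC # P, d) # T, g # (Q, c) # V, H)
      ((gamma w @ [], Suc (length H)) # (P, d) # T, V, ?H)"
    using mApp[of P d T g Q c V H] Q by simp
  ultimately show thesis using that by blast
qed

lemma mstep_simulates_reduction:
  assumes "unfold H u a 0 s" and "(step ^^ k) s (Lam w)"
  shows "\<exists>g X. (mstep ^^ (4 * k + 1)) ((gamma u @ P, a) # T, V, H) ((P, a) # T, g # V, H @ X)
    \<and> clo_rep (H @ X) g (Lam w)"
  using assms
proof (induction k arbitrary: u a H s w P T V rule: less_induct)
  case (less k)
  show ?case
  proof (cases u)
    case (Var n)
    with less.prems(1) obtain Q b u' where lk: "lookup H a n = Some (Q, b)"
      and Q: "prog_rep Q u'" and u': "unfold H u' b 0 s"
      by (auto elim: unfold.cases)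
    from Q u' obtain s' where "s = Lam s'"
      unfolding prog_rep_def by (auto elim: unfold_LamE)
    with less.prems(2) have "k = 0" "s = Lam w" by (auto dest: relpowp_step_Lam)
    moreover have "mstep ((gamma u @ P, a) # T, V, H) ((P, a) # T, (Q, b) # V, H @ [])"
      using Var lk by (auto intro: mVar)
    moreover have "clo_rep (H @ []) (Q, b) (Lam w)"
      using Q u' \<open>s = Lam w\<close> unfolding clo_rep_def by auto
    ultimately show ?thesis
      by (intro exI[of _ "(Q, b)"] exI[of _ "[]"]) (simp add: relpowp_1 del: relpowp.simps(2))
  next
    case (Lam u0)
    with less.prems(1) obtain s' where "s = Lam s'" by (auto elim: unfold_LamE)
    with less.prems(2) have "k = 0" "s = Lam w" by (auto dest: relpowp_step_Lam)
    moreover have "mstep ((gamma u @ P, a) # T, V, H) ((P, a) # T, (gamma u0, a) # V, H @ [])"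
      using Lam phi_gamma_Ret[of u0 P] by (auto intro: mLam)
    moreover have "clo_rep (H @ []) (gamma u0, a) (Lam w)"
      using less.prems(1) Lam \<open>s = Lam w\<close> unfolding clo_rep_def prog_rep_def by auto
    ultimately show ?thesis
      by (intro exI[of _ "(gamma u0, a)"] exI[of _ "[]"]) (simp add: relpowp_1 del: relpowp.simps(2))
  next
    case (App u1 u2)
    with less.prems(1) obtain s1 s2 where s: "s = App s1 s2"
      and u1: "unfold H u1 a 0 s1" and u2: "unfold H u2 a 0 s2"
      by (auto elim: unfold.cases)
    from less.prems(2)[unfolded s] obtain k1 k2 k3 a1 b2 where k: "k = k1 + k2 + Suc k3"
      and red1: "(step ^^ k1) s1 (Lam a1)" and red2: "(step ^^ k2) s2 (Lam b2)"
      and body: "(step ^^ k3) (subst a1 0 (Lam b2)) (Lam w)"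
      by (rule relpowp_step_App_LamE)
    then have "k1 < k" "k2 < k" "k3 < k" by simp_all
    from less.IH[OF \<open>k1 < k\<close> u1 red1, where P = "gamma u2 @ AppC # P" and T = T and V = V]
    obtain Q c X1 where
      run1: "(mstep ^^ (4 * k1 + 1)) ((gamma u1 @ gamma u2 @ AppC # P, a) # T, V, H)
        ((gamma u2 @ AppC # P, a) # T, (Q, c) # V, H @ X1)"
      and c1: "clo_rep (H @ X1) (Q, c) (Lam a1)" by (metis surj_pair)
    from less.IH[OF \<open>k2 < k\<close> unfold_append[OF u2, of X1] red2,
        where P = "AppC # P" and T = T and V = "(Q, c) # V"]
    obtain g X2 where
      run2: "(mstep ^^ (4 * k2 + 1)) ((gamma u2 @ AppC # P, a) # T, (Q, c) # V, H @ X1)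
        ((AppC # P, a) # T, g # (Q, c) # V, H @ X1 @ X2)"
      and c2: "clo_rep (H @ X1 @ X2) g (Lam b2)" unfolding append_assoc by blast
    let ?H = "H @ X1 @ X2" and ?e = "Suc (length (H @ X1 @ X2))"
    obtain w1 where
      beta: "mstep ((AppC # P, a) # T, g # (Q, c) # V, ?H)
        ((gamma w1 @ [], ?e) # (P, a) # T, V, ?H @ [(g, c)])"
      and w1: "unfold (?H @ [(g, c)]) w1 ?e 0 (subst a1 0 (Lam b2))"
      by (rule mstep_App_beta[OF clo_rep_append[OF c1, of X2, unfolded append_assoc] c2])
    from less.IH[OF \<open>k3 < k\<close> w1 body, where P = "[]" and T = "(P, a) # T" and V = V]
    obtain g3 X3 where
      run3: "(mstep ^^ (4 * k3 + 1)) ((gamma w1 @ [], ?e) # (P, a) # T, V, ?H @ [(g, c)])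
        (([], ?e) # (P, a) # T, g3 # V, ?H @ [(g, c)] @ X3)"
      and c3: "clo_rep (?H @ [(g, c)] @ X3) g3 (Lam w)" unfolding append_assoc by blast
    have steps: "Suc (Suc ((4 * k1 + 1) + (4 * k2 + 1)) + (4 * k3 + 1)) = 4 * k + 1"
      using k by simp
    have "(mstep ^^ Suc (Suc ((4 * k1 + 1) + (4 * k2 + 1)) + (4 * k3 + 1)))
        ((gamma u @ P, a) # T, V, H) ((P, a) # T, g3 # V, ?H @ [(g, c)] @ X3)"
      using relpowp_Suc_I[OF relpowp_trans[OF relpowp_Suc_I[OF relpowp_trans[OF run1 run2] beta]
          run3] mNil] App by simp
    with c3 show ?thesis unfolding steps
      by (intro exI[of _ g3] exI[of _ "X1 @ X2 @ [(g, c)] @ X3"]) simp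
  qed
qed

theorem theorem16:
  fixes s t :: tm and k :: nat
  assumes "closed s"
    and "(step ^^ k) s t"
    and "\<exists>u. t = Lam u"
  shows "\<exists>g H. (mstep ^^ (4 * k + 2)) (init s) ([], [g], H) \<and> clo_rep H g t"
proof -
  obtain w where t: "t = Lam w" using assms(3) by blast
  have "unfold [] s 0 0 s"
    using assms(1) unfolding closed_def by (rule unfold_self)
  from mstep_simulates_reduction[where P = "[]" and T = "[]" and V = "[]",
      OF this assms(2)[unfolded t]] t
  obtain g H where run: "(mstep ^^ (4 * k + 1)) ([(gamma s, 0)], [], []) ([([], 0)], [g], H)"
    and g: "clo_rep H g t" by (auto simp del: relpowp.simps(2))
  have "(mstep ^^ (4 * k + 2)) (init s) ([], [g], H)"
    using relpowp_Suc_I[OF run mNil] unfolding init_def by simp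
  with g show ?thesis by blast
qed

end
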